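(* Let $$Q_1(x) = x^{q^2+1} + 1 + x^t\, R(x) + x^t \sum_{j=0}^{\log_2\sqrt{q/2}\,-1} x^{2^j(\sqrt{2q}-2)t}\,\bigl(1 + x^{\sqrt{2q}\,t}\bigr)^{2^j-1},$$ where $$R(x) = \frac{1 + x^{\sqrt{2q}\,t(\sqrt{q/2}-1)}}{1 + x^{\sqrt{2q}\,t}} = \sum_{i=0}^{\sqrt{q/2}-2} x^{i\sqrt{2q}\,t}$$ (a polynomial over $\mathbb{F}_2$). Then the set of solutions of $Q_1(x) = 0$ is exactly $\mathcal{T}_1$.
   Context: Let $q = 2^m$ with $m \ge 3$ odd, so that $\sqrt{2q} = 2^{(m+1)/2}$ and $\sqrt{q/2} = 2^{(m-1)/2}$ are integers. Let $E = \mathbb{F}_{q^4}$, and put $s = q - \sqrt{2q} + 1$ and $t = q + \sqrt{2q} + 1$. Let $\mathcal{O}_s = \{x \in E \mid x^s = 1\}$ and $\mathcal{O}_t = \{x \in E \mid x^t = 1\}$. Define $$\mathcal{T}_1 = \mathcal{O}_t \cup \left\{\left(u^{q-1} + u^{-(q-1)}\right)^{q-1} uv \;\middle|\; u \in \mathcal{O}_s \setminus \{1\},\ v \in \mathcal{O}_t\right\}.$$ *)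

theory Defs
  imports Main
begin

text \<open>Parameters: q = 2^m with m odd, m >= 3.\<close>

definition qq :: "nat \<Rightarrow> nat" where "qq m = 2 ^ m"
definition sqrt2q :: "nat \<Rightarrow> nat" where "sqrt2q m = 2 ^ ((m + 1) div 2)"
definition sqrthq :: "nat \<Rightarrow> nat" where "sqrthq m = 2 ^ ((m - 1) div 2)"
definition ss :: "nat \<Rightarrow> nat" where "ss m = qq m - sqrt2q m + 1"
definition tt :: "nat \<Rightarrow> nat" where "tt m = qq m + sqrt2q m + 1"

definition logsqrthq :: "nat \<Rightarrow> nat" where "logsqrthq m = (m - 1) div 2"

definition Os :: "nat \<Rightarrow> 'a::field set" where "Os m = {x. x ^ ss m = 1}"
definition Ot :: "nat \<Rightarrow> 'a::field set" where "Ot m = {x. x ^ tt m = 1}"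

definition T1 :: "nat \<Rightarrow> 'a::field set" where
  "T1 m = Ot m \<union>
     {(u ^ (qq m - 1) + inverse u ^ (qq m - 1)) ^ (qq m - 1) * u * v | u v.
        u \<in> Os m - {1} \<and> v \<in> Ot m}"

definition Rpoly :: "nat \<Rightarrow> 'a::field \<Rightarrow> 'a" where
  "Rpoly m x = (\<Sum>i = 0 .. sqrthq m - 2. x ^ (i * sqrt2q m * tt m))"

definition Q1 :: "nat \<Rightarrow> 'a::field \<Rightarrow> 'a" where
  "Q1 m x = x ^ (qq m ^ 2 + 1) + 1 + x ^ tt m * Rpoly m x
     + x ^ tt m * (\<Sum>j < logsqrthq m.
          x ^ (2 ^ j * (sqrt2q m - 2) * tt m) * (1 + x ^ (sqrt2q m * tt m)) ^ (2 ^ j - 1))"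

end

theory Submission
  imports Defs "HOL-Computational_Algebra.Polynomial" "HOL-Computational_Algebra.Primes"
begin

text \<open>Every element of \<open>T1\<close> is a root of \<open>Q1\<close>, and \<open>T1\<close> has at least \<open>q^2 + 1 = deg Q1\<close>
  elements, so \<open>T1\<close> is the whole zero set. Points of \<open>O_t\<close> are roots because \<open>Q1(x)\<close> only depends
  on \<open>x^t\<close> there. For \<open>u \<in> O_s - {1}\<close> put \<open>b = u^r\<close> with \<open>r = sqrt(2q)\<close>; then \<open>u^q = b/u\<close>,
  \<open>b^q = b/u^2\<close> and \<open>b^r = (b/u)^2\<close>, so in characteristic 2 the maps \<open>y \<mapsto> y^q\<close>, \<open>y^r\<close>,
  \<open>y^k\<close> (\<open>k = sqrt(q/2)\<close>) act on rational expressions in \<open>u, b\<close> by substitution. With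
  \<open>W = u(1+b)/(u^2+b)\<close> and \<open>Y = (u+b)/(1+u)\<close> one finds \<open>w = W^2\<close>, \<open>x^(q^2+1) = W^4\<close> and
  \<open>x^t = Y^4\<close> for \<open>x = w u v\<close>, and the sum over \<open>j\<close> telescopes, so that
  \<open>Q1(x) = W^4 + 1 + (1 + W^4) = 0\<close>.
  The map \<open>(u, v) \<mapsto> w u v\<close> is injective and misses \<open>O_t\<close>, whence
  \<open>|T1| \<ge> t + (s - 1) t = q^2 + 1\<close>.\<close>

section \<open>Characteristic 2\<close>

lemma add_self_CHAR_2:
  assumes "CHAR('a::ring_1) = 2"
  shows "x + x = (0::'a)"
  using uminus_CHAR_2[OF assms, of x] by (metis add.right_inverse)

lemma add_eq_0_iff_CHAR_2:
  assumes "CHAR('a::ring_1) = 2"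
  shows "x + y = (0::'a) \<longleftrightarrow> x = y"
  using minus_CHAR_2[OF assms, of x y] by (metis eq_iff_diff_eq_0)

lemma numeral_2_eq_0_CHAR_2:
  assumes "CHAR('a::semiring_1) = 2"
  shows "(2::'a) = 0"
  using of_nat_CHAR[where 'a = 'a] by (simp add: assms)

lemma add_power_two_power_CHAR_2:
  assumes "CHAR('a::comm_semiring_1) = 2"
  shows "(x + y) ^ 2 ^ n = x ^ 2 ^ n + (y::'a) ^ 2 ^ n"
  by (rule freshmans_dream') (simp_all add: assms)

lemma power_two_power_eq_iff_CHAR_2:
  assumes "CHAR('a::idom) = 2"
  shows "x ^ 2 ^ n = (y::'a) ^ 2 ^ n \<longleftrightarrow> x = y"
proof
  assume "x ^ 2 ^ n = y ^ 2 ^ n"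
  then have "(x + y) ^ 2 ^ n = 0"
    by (simp add: add_power_two_power_CHAR_2[OF assms] add_self_CHAR_2[OF assms])
  then show "x = y"
    by (simp add: add_eq_0_iff_CHAR_2[OF assms])
qed simp

lemma sum_add_square_power_two_power_CHAR_2:
  assumes "CHAR('a::comm_ring_1) = 2"
  shows "(\<Sum>j<n. (g + g ^ 2) ^ 2 ^ j) = g + (g::'a) ^ 2 ^ n"
proof (induction n)
  case 0
  show ?case by (simp add: add_self_CHAR_2[OF assms])
next
  case (Suc n)
  have "(g + g ^ 2) ^ 2 ^ n = g ^ 2 ^ n + g ^ 2 ^ Suc n"
    by (simp add: add_power_two_power_CHAR_2[OF assms] mult.commute flip: power_mult)
  with Suc show ?case
    by (simp add: numeral_2_eq_0_CHAR_2[OF assms] flip: add.assoc)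
qed

section \<open>Finite fields\<close>

lemma power_card_minus_1_eq_1:
  fixes x :: "'a::{field,finite}"
  assumes "x \<noteq> 0"
  shows "x ^ (card (UNIV::'a set) - 1) = 1"
proof -
  let ?S = "UNIV - {0::'a}"
  have "bij_betw ((*) x) ?S ?S"
    by (rule bij_betw_byWitness[where f' = "(*) (inverse x)"]) (use assms in auto)
  then have "(\<Prod>y\<in>?S. x * y) = \<Prod>?S"
    using prod.reindex_bij_betw[of "(*) x" ?S ?S id] by simp
  moreover have "(\<Prod>y\<in>?S. x * y) = x ^ card ?S * \<Prod>?S"
    by (simp add: prod.distrib)
  moreover have "\<Prod>?S \<noteq> 0"
    by simp
  ultimately have "x ^ card ?S = 1"
    by simp
  then show ?thesis
    by (simp add: card_Diff_singleton)
qed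

lemma CHAR_eq_2_if_card_eq_power_2:
  assumes "card (UNIV::'a::{field,finite} set) = 2 ^ n" and "0 < n"
  shows "CHAR('a) = 2"
proof -
  have "(-1::'a) ^ (card (UNIV::'a set) - 1) = 1"
    by (rule power_card_minus_1_eq_1) simp
  moreover have "odd (card (UNIV::'a set) - 1)"
    using assms by simp
  ultimately have "(-1::'a) = 1"
    by simp
  then have "(2::'a) = 0"
    by (metis add.right_inverse one_add_one)
  then have "CHAR('a) dvd 2"
    using of_nat_eq_0_iff_char_dvd[of 2, where 'a = 'a] by simp
  then show ?thesis
    using two_is_prime_nat CHAR_not_1 by (auto simp: prime_nat_iff)
qed

text \<open>Every non-zero element is a root of \<open>X ^ n - 1\<close> or of its cofactor in \<open>X ^ (|K| - 1) - 1\<close>,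
  and the cofactor has degree \<open>|K| - 1 - n\<close>.\<close>
lemma card_roots_of_unity_ge:
  assumes "n dvd card (UNIV::'a::{field,finite} set) - 1" and "0 < n"
  shows "n \<le> card {x::'a. x ^ n = 1}"
proof -
  obtain d where d: "card (UNIV::'a set) - 1 = d * n"
    using assms(1) by (metis dvd_def mult.commute)
  have "card {0::'a, 1} \<le> card (UNIV::'a set)"
    by (rule card_mono) auto
  then have "0 < d"
    using d by (cases d) auto
  define H :: "'a poly" where "H = (\<Sum>i<d. monom 1 (i * n))"
  have poly_H: "poly H x = (\<Sum>i<d. (x ^ n) ^ i)" for x
    by (simp add: H_def poly_sum poly_monom mult.commute[of _ n] power_mult)
  have "poly H 0 \<noteq> 0"
    using \<open>0 < d\<close> \<open>0 < n\<close> by (simp add: poly_H power_0_left)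
  then have "H \<noteq> 0"
    by auto
  have "degree H \<le> (d - 1) * n"
    unfolding H_def by (rule degree_sum_le) (auto simp: degree_monom_eq)
  have "UNIV - {0} \<subseteq> {x::'a. x ^ n = 1} \<union> {x. poly H x = 0}"
  proof
    fix x :: 'a
    assume "x \<in> UNIV - {0}"
    then have "(x ^ n) ^ d = 1"
      using power_card_minus_1_eq_1[of x] d by (simp add: mult.commute[of _ n] power_mult)
    moreover have "(x ^ n) ^ d - 1 = (x ^ n - 1) * poly H x"
      by (simp only: poly_H power_diff_1_eq)
    ultimately have "(x ^ n - 1) * poly H x = 0"
      by simp
    then show "x \<in> {x::'a. x ^ n = 1} \<union> {x. poly H x = 0}"
      by auto
  qed
  then have "d * n \<le> card ({x::'a. x ^ n = 1} \<union> {x. poly H x = 0})"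
    using card_mono[of "{x::'a. x ^ n = 1} \<union> {x. poly H x = 0}" "UNIV - {0}"] d
    by (simp add: card_Diff_singleton)
  also have "\<dots> \<le> card {x::'a. x ^ n = 1} + card {x. poly H x = 0}"
    by (rule card_Un_le)
  also have "\<dots> \<le> card {x::'a. x ^ n = 1} + (d - 1) * n"
    using card_poly_roots_bound[OF \<open>H \<noteq> 0\<close>] \<open>degree H \<le> (d - 1) * n\<close> by simp
  finally show ?thesis
    using \<open>0 < d\<close> by (cases d) auto
qed

section \<open>The polynomial \<open>F\<close> with \<open>Q1(x) = x^(q^2+1) + 1 + F(x^t)\<close>\<close>

text \<open>The arguments are \<open>r = sqrt(2q)\<close>, \<open>k = sqrt(q/2)\<close> and \<open>L = log2 k\<close>.\<close>

definition Q1_tail :: "nat \<Rightarrow> nat \<Rightarrow> nat \<Rightarrow> 'a::comm_ring_1 poly" where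
  "Q1_tail r k L = [:0, 1:] * (\<Sum>i = 0..k - 2. monom 1 (i * r))
     + [:0, 1:] * (\<Sum>j<L. monom 1 (2 ^ j * (r - 2)) * (1 + monom 1 r) ^ (2 ^ j - 1))"

lemma poly_Q1_tail:
  "poly (Q1_tail r k L) y = y * (\<Sum>i = 0..k - 2. y ^ (i * r))
     + y * (\<Sum>j<L. y ^ (2 ^ j * (r - 2)) * (1 + y ^ r) ^ (2 ^ j - 1))"
  by (simp add: Q1_tail_def poly_sum poly_monom distrib_left)

lemma poly_Q1_tail_1:
  assumes "CHAR('a::comm_ring_1) = 2" and "even k" "0 < k" and "0 < L"
  shows "poly (Q1_tail r k L) (1::'a) = 0"
proof -
  obtain j where "k = 2 * j"
    using assms(2) by (rule evenE)
  with assms(3) obtain i where "k = 2 * i + 2"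
    by (metis gr0_implies_Suc mult_Suc_right add.commute nat_0_less_mult_iff)
  then have "(\<Sum>i = 0..k - 2. 1) = (1::'a)"
    using numeral_2_eq_0_CHAR_2[OF assms(1)] by simp
  moreover have "(2::nat) ^ j \<le> 1 \<longleftrightarrow> j = 0" for j
    using one_less_power[of "2::nat" j] by (cases "j = 0") auto
  then have "(\<Sum>j<L. (1 + 1) ^ (2 ^ j - 1)) = (1::'a)"
    using assms(4) by (simp add: numeral_2_eq_0_CHAR_2[OF assms(1)] power_0_left)
  ultimately show ?thesis
    by (simp add: poly_Q1_tail numeral_2_eq_0_CHAR_2[OF assms(1)])
qed

lemma Q1_tail_mult:
  fixes y :: "'a::comm_ring_1"
  assumes "CHAR('a) = 2" and "2 \<le> k"
  shows "(1 + y ^ r) * poly (Q1_tail r k L) y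
    = y * (1 + y ^ (r * (k - 1))) + y * (\<Sum>j<L. (y ^ (r - 2) * (1 + y ^ r)) ^ 2 ^ j)"
proof -
  have "{0..k - 2} = {..<k - 1}"
    using assms(2) by auto
  then have "(\<Sum>i = 0..k - 2. y ^ (i * r)) = (\<Sum>i<k - 1. (y ^ r) ^ i)"
    by (simp add: power_mult mult.commute[of _ r])
  moreover have "(1 + y ^ r) * (\<Sum>i<k - 1. (y ^ r) ^ i) = 1 + (y ^ r) ^ (k - 1)"
    using one_diff_power_eq[of "y ^ r" "k - 1"] by (simp add: minus_CHAR_2[OF assms(1)])
  ultimately have geometric: "(1 + y ^ r) * (\<Sum>i = 0..k - 2. y ^ (i * r)) = 1 + y ^ (r * (k - 1))"
    by (simp add: power_mult)
  have power_2_j: "(1 + y ^ r) * (y ^ (2 ^ j * (r - 2)) * (1 + y ^ r) ^ (2 ^ j - 1))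
      = (y ^ (r - 2) * (1 + y ^ r)) ^ 2 ^ j" for j :: nat
  proof -
    have "(1 + y ^ r) * (1 + y ^ r) ^ (2 ^ j - 1) = (1 + y ^ r) ^ 2 ^ j"
      by (simp flip: power_Suc)
    then show ?thesis
      by (simp add: power_mult_distrib mult.commute[of "2 ^ j"] power_mult
          mult.left_commute[of "1 + y ^ r"])
  qed
  have "(1 + y ^ r) * poly (Q1_tail r k L) y = y * ((1 + y ^ r) * (\<Sum>i = 0..k - 2. y ^ (i * r)))
      + y * (\<Sum>j<L. (1 + y ^ r) * (y ^ (2 ^ j * (r - 2)) * (1 + y ^ r) ^ (2 ^ j - 1)))"
    by (simp add: poly_Q1_tail algebra_simps sum_distrib_left)
  then show ?thesis
    unfolding geometric power_2_j .
qed

lemma degree_X_mult_le: "degree ([:0, 1:] * p) \<le> 1 + degree (p :: 'a::comm_ring_1 poly)"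
  using degree_mult_le[of "[:0, 1:]" p] degree_pCons_le[of 0 "[:1:]"] by simp

lemma degree_Q1_tail_summand_le:
  assumes "2 * 2 ^ j \<le> k"
  shows "degree (monom (1::'a::comm_ring_1) (2 ^ j * (2 * k - 2)) * (1 + monom 1 (2 * k)) ^ (2 ^ j - 1))
    \<le> 2 * k * k - 2 * k - 1"
proof -
  obtain e where e: "(2::nat) ^ j = e + 1"
    using gr0_implies_Suc[of "2 ^ j"] by auto
  have "2 \<le> k"
    using assms e by simp
  then obtain k' where k': "k = k' + 2"
    using le_Suc_ex by (metis add.commute)
  have "2 * e \<le> k'"
    using assms e k' by simp
  have "degree ((1::'a poly) + monom 1 (2 * k)) \<le> 2 * k"
    by (rule degree_add_le) (simp_all add: degree_monom_le)
  then have "degree (((1::'a poly) + monom 1 (2 * k)) ^ (2 ^ j - 1)) \<le> 2 * k * (2 ^ j - 1)"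
    by (rule order_trans[OF degree_power_le mult_le_mono1])
  then have "degree (monom (1::'a) (2 ^ j * (2 * k - 2)) * (1 + monom 1 (2 * k)) ^ (2 ^ j - 1))
      \<le> 2 ^ j * (2 * k - 2) + 2 * k * (2 ^ j - 1)"
    by (rule order_trans[OF degree_mult_le add_mono[OF degree_monom_le]])
  also have "\<dots> \<le> 2 * k * k - 2 * k - 1"
  proof -
    have square: "e * (k' * 4) \<le> k' * (k' * 2)"
      using mult_le_mono1[OF \<open>2 * e \<le> k'\<close>, of "2 * k'"] by (simp add: algebra_simps)
    show ?thesis
      unfolding e k' by (simp add: algebra_simps) (use square \<open>2 * e \<le> k'\<close> in linarith)
  qed
  finally show ?thesis .
qed

lemma degree_Q1_tail_less:
  assumes "2 \<le> k" and "2 ^ L \<le> k"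
  shows "degree (Q1_tail (2 * k) k L :: 'a::comm_ring_1 poly) < 2 * k * k - 2 * k + 1"
proof -
  let ?S1 = "\<Sum>i = 0..k - 2. monom (1::'a) (i * (2 * k))"
  let ?S2 = "\<Sum>j<L. monom (1::'a) (2 ^ j * (2 * k - 2)) * (1 + monom 1 (2 * k)) ^ (2 ^ j - 1)"
  obtain k' where k': "k = k' + 2"
    using assms(1) le_Suc_ex by (metis add.commute)
  have "degree ([:0, 1:] * ?S1) \<le> 1 + degree ?S1"
    by (rule degree_X_mult_le)
  also have "degree ?S1 \<le> (k - 2) * (2 * k)"
    by (rule degree_sum_le) (auto intro: order_trans[OF degree_monom_le] mult_le_mono1)
  also have "1 + (k - 2) * (2 * k) < 2 * k * k - 2 * k + 1"
    unfolding k' by (simp add: algebra_simps)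
  finally have first: "degree ([:0, 1:] * ?S1) < 2 * k * k - 2 * k + 1"
    by simp
  have "2 * 2 ^ j \<le> k" if "j < L" for j
    using that assms(2) power_increasing[of "Suc j" L "2::nat"] by simp
  then have "degree ?S2 \<le> 2 * k * k - 2 * k - 1"
    by (intro degree_sum_le degree_Q1_tail_summand_le) auto
  then have "degree ([:0, 1:] * ?S2) \<le> 1 + (2 * k * k - 2 * k - 1)"
    using degree_X_mult_le[of ?S2] by simp
  also have "\<dots> < 2 * k * k - 2 * k + 1"
    unfolding k' by (simp add: algebra_simps)
  finally have second: "degree ([:0, 1:] * ?S2) < 2 * k * k - 2 * k + 1" .
  from degree_add_less[OF first second] show ?thesis
    by (simp only: Q1_tail_def)
qed

locale suzuki_parameters =
  fixes m :: nat
  assumes odd_m: "odd m" and three_le_m: "3 \<le> m"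
begin

abbreviation q where "q \<equiv> qq m"
abbreviation r where "r \<equiv> sqrt2q m"
abbreviation k where "k \<equiv> sqrthq m"
abbreviation L where "L \<equiv> logsqrthq m"
abbreviation s where "s \<equiv> ss m"
abbreviation t where "t \<equiv> tt m"

lemma L_pos: "0 < L"
  using three_le_m by (simp add: logsqrthq_def)

lemma k_eq: "k = 2 ^ L"
  by (simp add: sqrthq_def logsqrthq_def)

lemma r_eq: "r = 2 * k" and q_eq: "q = r * k"
proof -
  obtain l where "m = 2 * l + 1"
    using odd_m by (rule oddE)
  then show "r = 2 * k" "q = r * k"
    by (simp_all add: qq_def sqrt2q_def sqrthq_def flip: power_add)
qed

lemma two_le_k: "2 \<le> k"
  using L_pos power_increasing[of 1 L "2::nat"] by (simp add: k_eq)

lemma s_add_r: "s + r = q + 1"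
proof -
  have "r \<le> q"
    using two_le_k by (simp add: q_eq r_eq)
  then show ?thesis
    by (simp add: ss_def)
qed

lemma t_eq: "t = s + 2 * r"
  using s_add_r by (simp add: tt_def)

lemma s_pos: "0 < s"
  by (simp add: ss_def)

lemma t_pos: "0 < t"
  by (simp add: tt_def)

lemma s_mult_t: "s * t = q ^ 2 + 1"
proof -
  have "r * r = 2 * q"
    by (simp add: q_eq r_eq)
  have "(s + r) * (s + r) = (q + 1) * (q + 1)"
    by (simp only: s_add_r)
  then have "s * t + r * r = q * q + 2 * q + 1"
    by (simp add: t_eq algebra_simps)
  then show ?thesis
    using \<open>r * r = 2 * q\<close> by (simp add: power2_eq_square)
qed

lemma s_dvd_q4_minus_1: "s dvd q ^ 4 - 1"
  and t_dvd_q4_minus_1: "t dvd q ^ 4 - 1"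
proof -
  have "(a - 1) * (a + 1) = a * a - 1" for a :: nat
    by (cases a) simp_all
  then have "q ^ 4 - 1 = (q ^ 2 - 1) * (q ^ 2 + 1)"
    by (simp flip: power_add)
  then have "q ^ 4 - 1 = (q ^ 2 - 1) * s * t"
    by (simp only: mult.assoc s_mult_t)
  then show "s dvd q ^ 4 - 1" "t dvd q ^ 4 - 1"
    by simp_all
qed

lemma add_power_q: "CHAR('a::comm_semiring_1) = 2 \<Longrightarrow> (x + y) ^ q = x ^ q + (y::'a) ^ q"
  unfolding qq_def by (rule add_power_two_power_CHAR_2)

lemma add_power_r: "CHAR('a::comm_semiring_1) = 2 \<Longrightarrow> (x + y) ^ r = x ^ r + (y::'a) ^ r"
  unfolding sqrt2q_def by (rule add_power_two_power_CHAR_2)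

lemma add_power_k: "CHAR('a::comm_semiring_1) = 2 \<Longrightarrow> (x + y) ^ k = x ^ k + (y::'a) ^ k"
  unfolding sqrthq_def by (rule add_power_two_power_CHAR_2)

lemma Q1_eq_tail: "Q1 m x = x ^ (q ^ 2 + 1) + 1 + poly (Q1_tail r k L) (x ^ t)"
proof -
  have "x ^ (a * t) = (x ^ t) ^ a" for a
    by (metis mult.commute power_mult)
  then show ?thesis
    by (simp add: Q1_def Rpoly_def poly_Q1_tail add.assoc)
qed

lemma Q1_eq_0_if_Ot:
  assumes "CHAR('a::field) = 2" and "(x::'a) \<in> Ot m"
  shows "Q1 m x = 0"
proof -
  have "x ^ t = 1"
    using assms(2) by (simp add: Ot_def)
  then have "x ^ (q ^ 2 + 1) = 1"
    by (metis s_mult_t mult.commute power_mult power_one)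
  moreover have "poly (Q1_tail r k L) (1::'a) = 0"
    using assms(1) two_le_k L_pos by (intro poly_Q1_tail_1) (simp_all add: k_eq)
  ultimately show ?thesis
    using \<open>x ^ t = 1\<close> by (simp add: Q1_eq_tail numeral_2_eq_0_CHAR_2[OF assms(1)] flip: one_add_one)
qed

definition T1_param :: "'a::field \<Rightarrow> 'a \<Rightarrow> 'a" where
  "T1_param u v = (u ^ (q - 1) + inverse u ^ (q - 1)) ^ (q - 1) * u * v"

lemma T1_eq_image: "T1 m = Ot m \<union> (\<lambda>(u, v). T1_param u v) ` ((Os m - {1}) \<times> Ot m)"
  unfolding T1_def T1_param_def by auto

end

section \<open>The elements \<open>w u v\<close> of \<open>T1\<close>\<close>

locale suzuki_point = suzuki_parameters +
  fixes u :: "'a::field"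
  assumes CHAR_2: "CHAR('a) = 2" and u_pow_s: "u ^ s = 1" and u_ne_1: "u \<noteq> 1"
begin

text \<open>For \<open>x = w u v\<close> one has \<open>w = W^2\<close>, \<open>x^t = Y^4\<close> and
  \<open>(x^t)^(r-2) (1 + x^(r t)) = G^4 + G^8\<close>.\<close>

definition b where "b = u ^ r"
definition W where "W = u * (1 + b) / (u ^ 2 + b)"
definition Y where "Y = (u + b) / (1 + u)"
definition G where "G = (u ^ 2 + b) / (u ^ 2 * (1 + b))"

lemma u_nonzero: "u \<noteq> 0"
  using u_pow_s s_pos by (auto simp: zero_power)

lemma b_nonzero: "b \<noteq> 0"
  by (simp add: b_def u_nonzero)

text \<open>As \<open>u^(q+1) = u^(s+r)\<close> and \<open>r^2 = 2q\<close>, the \<open>q\<close>-th, \<open>r\<close>-th and \<open>k\<close>-th powers of \<open>u\<close> and \<open>b\<close>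
  are rational in \<open>u\<close> and \<open>b\<close>; these powers being additive, every power of a rational expression in
  \<open>u, b\<close> below is computed by substitution.\<close>

lemma u_pow_q: "u ^ q = b / u"
proof -
  have "u ^ q * u = u ^ (s + r)"
    by (simp add: s_add_r)
  also have "\<dots> = b"
    by (simp add: power_add u_pow_s b_def)
  finally show ?thesis
    by (simp add: u_nonzero eq_divide_eq)
qed

lemma b_pow_r: "b ^ r = (b / u) ^ 2"
proof -
  have "b ^ r = u ^ (q * 2)"
    by (simp add: b_def q_eq r_eq ac_simps flip: power_mult)
  then show ?thesis
    by (simp add: power_mult u_pow_q)
qed

lemma b_pow_q: "b ^ q = b / u ^ 2"
proof -
  have "b ^ q = (u ^ q) ^ r"
    by (simp add: b_def mult.commute flip: power_mult)
  then have "b ^ q = (b / u) ^ r"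
    by (simp only: u_pow_q)
  then show ?thesis
    using u_nonzero b_nonzero by (simp add: power_divide b_pow_r flip: b_def) (simp add: power2_eq_square)
qed

lemma u2_pow_q: "(u ^ 2) ^ q = (b / u) ^ 2"
  by (simp add: mult.commute flip: power_mult u_pow_q)

lemma u2_pow_r: "(u ^ 2) ^ r = b ^ 2"
  by (simp add: b_def mult.commute flip: power_mult)

lemma u2_pow_k: "(u ^ 2) ^ k = b"
  by (simp add: b_def r_eq flip: power_mult)

lemma b_pow_k: "b ^ k = b / u"
proof -
  have "b ^ k = u ^ q"
    by (simp add: b_def q_eq flip: power_mult)
  then show ?thesis
    by (simp only: u_pow_q)
qed

lemma b_ne_1: "b \<noteq> 1"
proof
  assume "b = 1"
  then have "u ^ 2 ^ 1 = 1 ^ 2 ^ 1"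
    using b_pow_r u_nonzero by (simp add: power_divide)
  then show False
    using u_ne_1 by (simp only: power_two_power_eq_iff_CHAR_2[OF CHAR_2])
qed

lemma b_ne_u: "b \<noteq> u"
proof
  assume "b = u"
  then have "b ^ q = 1"
    using u_pow_q u_nonzero by simp
  then have "u * u = u"
    using b_pow_q u_nonzero \<open>b = u\<close> by (simp add: power2_eq_square field_simps)
  then show False
    using u_ne_1 u_nonzero by simp
qed

lemma b_ne_u2: "b \<noteq> u ^ 2"
proof
  assume "b = u ^ 2"
  then have "(b / u) ^ 2 = b / u ^ 2"
    using b_pow_q u2_pow_q by simp
  then have "b * b = b"
    using u_nonzero by (simp add: power_divide power2_eq_square)
  then show False
    using b_nonzero b_ne_1 by simp
qed

lemma sums_nonzero: "1 + u \<noteq> 0" "1 + b \<noteq> 0" "u + b \<noteq> 0" "u ^ 2 + b \<noteq> 0"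
  using u_ne_1 b_ne_1 b_ne_u b_ne_u2 by (auto simp: add_eq_0_iff_CHAR_2[OF CHAR_2])

lemmas nonzero = u_nonzero b_nonzero sums_nonzero

lemma W_pow_q: "W ^ q = inverse W"
proof -
  have "W ^ q = (b / u) * (1 + b / u ^ 2) / ((b / u) ^ 2 + b / u ^ 2)"
    by (simp add: W_def power_divide power_mult_distrib add_power_q[OF CHAR_2] u_pow_q b_pow_q
        u2_pow_q)
  also have "\<dots> = inverse W"
    using nonzero unfolding W_def by (simp add: divide_simps) algebra
  finally show ?thesis .
qed

lemma W_nonzero: "W \<noteq> 0"
  using nonzero by (simp add: W_def)

lemma W_pow_Suc_q: "W ^ (q + 1) = 1"
  using W_pow_q W_nonzero by simp

lemma frobenius_images_nonzero: "1 + b / u \<noteq> 0" "b ^ 2 + (b / u) ^ 2 \<noteq> 0"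
proof -
  have "(1 + u) ^ q = 1 + b / u" "(u ^ 2 + b) ^ r = b ^ 2 + (b / u) ^ 2"
    by (simp_all add: add_power_q[OF CHAR_2] add_power_r[OF CHAR_2] u_pow_q u2_pow_r b_pow_r)
  then show "1 + b / u \<noteq> 0" "b ^ 2 + (b / u) ^ 2 \<noteq> 0"
    using sums_nonzero by (metis power_not_zero)+
qed

text \<open>The method \<open>algebra\<close> ignores the hypothesis \<open>2 = 0\<close>; the instances \<open>2 u = 0\<close>
  and \<open>2 b = 0\<close> serve instead, since the two sides of the identities below differ by
  twice a polynomial without constant term.\<close>

lemmas add_self_u_b = add_self_CHAR_2[OF CHAR_2, of u] add_self_CHAR_2[OF CHAR_2, of b]

lemma b_mult_W_pow_r: "b * W ^ r = Y ^ 2"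
proof -
  have "W ^ r = b * (1 + (b / u) ^ 2) / (b ^ 2 + (b / u) ^ 2)"
    by (simp add: W_def power_divide power_mult_distrib add_power_r[OF CHAR_2] b_pow_r u2_pow_r
        flip: b_def)
  then have "b * W ^ r = b * (b * (1 + (b / u) ^ 2) / (b ^ 2 + (b / u) ^ 2))"
    by simp
  also have "\<dots> = Y ^ 2"
    using nonzero frobenius_images_nonzero unfolding Y_def by (simp add: divide_simps) (use add_self_u_b in algebra)
  finally show ?thesis .
qed

lemma Y_pow_r: "Y ^ r = b * G"
proof -
  have "Y ^ r = (b + (b / u) ^ 2) / (1 + b)"
    by (simp add: Y_def power_divide add_power_r[OF CHAR_2] b_pow_r flip: b_def)
  also have "\<dots> = b * G"
    using nonzero unfolding G_def by (simp add: divide_simps) algebra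
  finally show ?thesis .
qed

lemma Y_mult_Y_pow_q: "Y * Y ^ q = b / u"
proof -
  have "Y ^ q = (b / u + b / u ^ 2) / (1 + b / u)"
    by (simp add: Y_def power_divide add_power_q[OF CHAR_2] u_pow_q b_pow_q)
  then have "Y * Y ^ q = Y * ((b / u + b / u ^ 2) / (1 + b / u))"
    by simp
  also have "\<dots> = b / u"
    using nonzero frobenius_images_nonzero unfolding Y_def by (simp add: divide_simps) algebra
  finally show ?thesis .
qed

lemma G_pow_k: "G ^ k = inverse Y"
proof -
  have "G ^ k = (b + b / u) / (b * (1 + b / u))"
    by (simp add: G_def power_divide power_mult_distrib add_power_k[OF CHAR_2] u2_pow_k b_pow_k)
  also have "\<dots> = inverse Y"
    using nonzero frobenius_images_nonzero unfolding Y_def by (simp add: divide_simps) algebra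
  finally show ?thesis .
qed

lemma Y_nonzero: "Y \<noteq> 0"
  using nonzero by (simp add: Y_def)

lemma one_add_Y_pow_r_nonzero: "1 + Y ^ r \<noteq> 0"
proof -
  have "1 + Y ^ r = (u + b) ^ 2 / (u ^ 2 * (1 + b))"
    using nonzero unfolding Y_pow_r G_def by (simp add: divide_simps) (use add_self_u_b in algebra)
  then show ?thesis
    using nonzero by simp
qed

lemma Y_pow_r_over_Y2: "Y ^ r / Y ^ 2 * (1 + Y ^ r) = G + G ^ 2"
  unfolding Y_pow_r using nonzero unfolding G_def Y_def
  by (simp add: divide_simps) (use add_self_u_b in algebra)

lemma Y_mult_tail_terms: "Y * (1 + Y ^ q / Y ^ r + G + G ^ k) = (1 + Y ^ r) * (1 + W)"
proof -
  have "Y * (1 + Y ^ q / Y ^ r + G + G ^ k) = Y + Y * Y ^ q / Y ^ r + Y * G + Y * G ^ k"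
    by (simp add: algebra_simps)
  also have "\<dots> = Y + (b / u) / (b * G) + Y * G + 1"
    using Y_nonzero by (simp add: Y_mult_Y_pow_q Y_pow_r G_pow_k)
  also have "\<dots> = (1 + b * G) * (1 + W)"
    using nonzero unfolding Y_def G_def W_def by (simp add: divide_simps) (use add_self_u_b in algebra)
  finally show ?thesis
    by (simp only: Y_pow_r)
qed

lemma add_power_4: "(x + y) ^ 4 = x ^ 4 + (y::'a) ^ 4"
  using add_power_two_power_CHAR_2[OF CHAR_2, of x y 2] by simp

lemma Y4_pow_r_mult_k_minus_1: "(Y ^ 4) ^ (r * (k - 1)) = (Y ^ q / Y ^ r) ^ 4"
proof -
  have commute: "(Y ^ 4) ^ n = (Y ^ n) ^ 4" for n
    by (simp add: mult.commute flip: power_mult)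
  have "r * (k - 1) + r = q"
    using two_le_k mult_Suc_right[of r "k - 1"] by (simp add: q_eq)
  then have "(Y ^ 4) ^ (r * (k - 1)) * (Y ^ 4) ^ r = (Y ^ 4) ^ q"
    by (metis power_add)
  then have "(Y ^ 4) ^ (r * (k - 1)) * (Y ^ r) ^ 4 = (Y ^ q) ^ 4"
    by (simp only: commute[of r] commute[of q])
  then show ?thesis
    using Y_nonzero by (simp add: power_divide eq_divide_eq)
qed

lemma Y4_pow_r_minus_2_mult: "(Y ^ 4) ^ (r - 2) * (1 + (Y ^ 4) ^ r) = G ^ 4 + (G ^ 4) ^ 2"
proof -
  have "r - 2 + 2 = r"
    using two_le_k by (simp add: r_eq)
  then have "(Y ^ 4) ^ (r - 2) * (Y ^ 2) ^ 4 = (Y ^ r) ^ 4"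
    by (metis mult.commute power_add power_mult)
  then have "(Y ^ 4) ^ (r - 2) = (Y ^ r / Y ^ 2) ^ 4"
    using Y_nonzero by (simp add: power_divide eq_divide_eq)
  moreover have "(Y ^ 4) ^ r = (Y ^ r) ^ 4"
    by (simp add: mult.commute flip: power_mult)
  ultimately have "(Y ^ 4) ^ (r - 2) * (1 + (Y ^ 4) ^ r) = (Y ^ r / Y ^ 2 * (1 + Y ^ r)) ^ 4"
    by (simp only: power_mult_distrib add_power_4 power_one)
  then show ?thesis
    unfolding Y_pow_r_over_Y2 by (simp add: add_power_4 flip: power_mult)
qed

lemma poly_Q1_tail_Y4: "poly (Q1_tail r k L) (Y ^ 4) = 1 + W ^ 4"
proof -
  define y where "y = Y ^ 4"
  have y_pow_r: "y ^ r = (Y ^ r) ^ 4"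
    by (simp add: y_def mult.commute flip: power_mult)
  have "(\<Sum>j<L. (y ^ (r - 2) * (1 + y ^ r)) ^ 2 ^ j) = G ^ 4 + (G ^ 4) ^ 2 ^ L"
    unfolding y_def Y4_pow_r_minus_2_mult by (rule sum_add_square_power_two_power_CHAR_2[OF CHAR_2])
  also have "(G ^ 4) ^ 2 ^ L = (G ^ k) ^ 4"
    by (simp add: k_eq mult.commute flip: power_mult)
  finally have "(1 + y ^ r) * poly (Q1_tail r k L) y
      = y * (1 + (Y ^ q / Y ^ r) ^ 4) + y * (G ^ 4 + (G ^ k) ^ 4)"
    by (simp only: Q1_tail_mult[OF CHAR_2 two_le_k] y_def Y4_pow_r_mult_k_minus_1)
  also have "\<dots> = (Y * (1 + Y ^ q / Y ^ r + G + G ^ k)) ^ 4"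
    by (simp add: y_def add_power_4 power_mult_distrib power_divide algebra_simps)
  also have "\<dots> = (1 + y ^ r) * (1 + W ^ 4)"
    by (simp add: Y_mult_tail_terms y_pow_r add_power_4 power_mult_distrib)
  finally have "(1 + y ^ r) * poly (Q1_tail r k L) y = (1 + y ^ r) * (1 + W ^ 4)" .
  moreover have "1 + y ^ r = (1 + Y ^ r) ^ 4"
    by (simp add: y_pow_r add_power_4)
  ultimately show ?thesis
    using one_add_Y_pow_r_nonzero by (simp add: y_def)
qed

lemma T1_param_eq: "T1_param u v = W ^ 2 * u * v"
proof -
  define A where "A = u ^ (q - 1) + inverse u ^ (q - 1)"
  have q_pos: "Suc (q - 1) = q"
    using two_le_k by (simp add: q_eq r_eq)
  then have "u ^ (q - 1) * u = b / u"
    by (metis power_Suc2 u_pow_q)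
  then have "u ^ (q - 1) = b / u ^ 2"
    using u_nonzero by (simp add: field_simps power2_eq_square)
  then have A_eq: "A = b / u ^ 2 + u ^ 2 / b"
    by (simp add: A_def power_inverse)
  then have "A ^ q = 1 / b + b"
    using nonzero by (simp add: add_power_q[OF CHAR_2] power_divide b_pow_q u2_pow_q)
      (simp add: field_simps power2_eq_square)
  moreover have "A * W ^ 2 = 1 / b + b"
    using nonzero unfolding A_eq W_def by (simp add: divide_simps) (use add_self_u_b in algebra)
  moreover have "1 / b + b \<noteq> 0"
  proof
    assume "1 / b + b = 0"
    then have "b ^ 2 ^ 1 = 1 ^ 2 ^ 1"
      using b_nonzero by (simp add: add_eq_0_iff_CHAR_2[OF CHAR_2] field_simps power2_eq_square)
    then show False
      using b_ne_1 by (simp only: power_two_power_eq_iff_CHAR_2[OF CHAR_2])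
  qed
  moreover have "A ^ (q - 1) * A = A ^ q"
    using q_pos by (metis power_Suc2)
  ultimately have "A ^ (q - 1) = W ^ 2"
    by (metis mult.commute mult_cancel_left mult_zero_left)
  then show ?thesis
    by (simp add: T1_param_def A_def)
qed

lemma W2uv_pow_t:
  assumes "v ^ t = 1"
  shows "(W ^ 2 * u * v) ^ t = Y ^ 4" and "(W ^ 2 * u * v) ^ t = (W * u) ^ (2 * r)"
proof -
  have t_split: "t = (q + 1) + r"
    by (simp add: tt_def)
  have "W ^ t = W ^ r"
    using W_pow_Suc_q by (simp add: t_split power_add)
  moreover have "u ^ t = b * b"
    using u_nonzero by (simp add: t_split power_add u_pow_q b_def)
  ultimately have main: "(W ^ 2 * u * v) ^ t = (b * W ^ r) ^ 2"
    using assms by (simp add: power_mult_distrib power2_eq_square ac_simps flip: power_mult)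
  then show "(W ^ 2 * u * v) ^ t = Y ^ 4"
    by (simp add: b_mult_W_pow_r flip: power_mult)
  have "(W * u) ^ (2 * r) = (b * W ^ r) ^ 2"
    by (simp add: b_def power_mult_distrib ac_simps flip: power_mult)
  with main show "(W ^ 2 * u * v) ^ t = (W * u) ^ (2 * r)"
    by simp
qed

lemma W2uv_pow_N:
  assumes "v ^ t = 1"
  shows "(W ^ 2 * u * v) ^ (q ^ 2 + 1) = W ^ 4"
proof -
  have "1 \<le> q"
    using two_le_k by (simp add: q_eq r_eq)
  then have "q ^ 2 + 1 = (q + 1) * (q - 1) + 2"
    by (cases q) (simp_all add: power2_eq_square algebra_simps)
  then have "W ^ (q ^ 2 + 1) = (W ^ (q + 1)) ^ (q - 1) * W ^ 2"
    by (simp only: power_add power_mult)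
  then have W_pow: "W ^ (q ^ 2 + 1) = W ^ 2"
    unfolding W_pow_Suc_q by simp
  have u_pow: "u ^ (q ^ 2 + 1) = 1"
    using u_pow_s by (simp only: s_mult_t[symmetric] power_mult power_one)
  have v_pow: "v ^ (q ^ 2 + 1) = 1"
    using assms by (simp only: s_mult_t[symmetric] mult.commute[of s t] power_mult power_one)
  have "(W ^ 2) ^ (q ^ 2 + 1) = (W ^ (q ^ 2 + 1)) ^ 2"
    by (metis mult.commute power_mult)
  then show ?thesis
    by (simp only: power_mult_distrib W_pow u_pow v_pow mult_1_right) (simp flip: power_mult)
qed

lemma W2uv_pow_t_ne_1:
  assumes "v ^ t = 1"
  shows "(W ^ 2 * u * v) ^ t \<noteq> 1"
proof
  assume "(W ^ 2 * u * v) ^ t = 1"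
  then have "Y ^ 2 ^ 2 = 1 ^ 2 ^ 2"
    using W2uv_pow_t(1)[OF assms] by simp
  then have "Y = 1"
    by (simp only: power_two_power_eq_iff_CHAR_2[OF CHAR_2])
  then show False
    using b_ne_1 nonzero by (simp add: Y_def)
qed

lemma Q1_W2uv_eq_0:
  assumes "v ^ t = 1"
  shows "Q1 m (W ^ 2 * u * v) = 0"
proof -
  have "Q1 m (W ^ 2 * u * v) = W ^ 4 + 1 + (1 + W ^ 4)"
    by (simp only: Q1_eq_tail W2uv_pow_N[OF assms] W2uv_pow_t(1)[OF assms] poly_Q1_tail_Y4)
  also have "\<dots> = (1 + W ^ 4) + (1 + W ^ 4)"
    by (simp only: ac_simps)
  finally show ?thesis
    by (simp only: add_self_CHAR_2[OF CHAR_2])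
qed

end

section \<open>The zero set of \<open>Q1\<close>\<close>

context suzuki_parameters
begin

lemma suzuki_point_if_Os:
  assumes "CHAR('a::field) = 2" and "(u::'a) \<in> Os m - {1}"
  shows "suzuki_point m u"
  using assms by unfold_locales (simp_all add: odd_m three_le_m Os_def)

lemma T1_subset_Q1_roots:
  assumes "CHAR('a::field) = 2"
  shows "T1 m \<subseteq> {x::'a. Q1 m x = 0}"
proof
  fix x :: 'a
  assume "x \<in> T1 m"
  then consider "x \<in> Ot m" | u v where "u \<in> Os m - {1}" "v \<in> Ot m" "x = T1_param u v"
    unfolding T1_eq_image by auto
  then show "x \<in> {x. Q1 m x = 0}"
  proof cases
    case 1
    then show ?thesis
      using Q1_eq_0_if_Ot[OF assms] by simp
  next
    case 2
    interpret P: suzuki_point m u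
      using suzuki_point_if_Os[OF assms 2(1)] .
    show ?thesis
      using 2 P.Q1_W2uv_eq_0 by (simp add: P.T1_param_eq Ot_def)
  qed
qed

lemma T1_param_notin_Ot:
  assumes "CHAR('a::field) = 2" and "(u::'a) \<in> Os m - {1}" and "v \<in> Ot m"
  shows "T1_param u v \<notin> Ot m"
proof -
  interpret P: suzuki_point m u
    using suzuki_point_if_Os[OF assms(1,2)] .
  show ?thesis
    using assms(3) P.W2uv_pow_t_ne_1 by (simp add: P.T1_param_eq Ot_def)
qed

lemma T1_param_inject:
  assumes "CHAR('a::field) = 2"
    and u: "(u::'a) \<in> Os m - {1}" "u' \<in> Os m - {1}" and v: "v \<in> Ot m" "v' \<in> Ot m"
    and eq: "T1_param u v = T1_param u' v'"
  shows "u = u' \<and> v = v'"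
proof -
  interpret P: suzuki_point m u
    using suzuki_point_if_Os[OF assms(1) u(1)] .
  interpret P': suzuki_point m u'
    using suzuki_point_if_Os[OF assms(1) u(2)] .
  have v_t: "v ^ t = 1" "v' ^ t = 1"
    using v by (simp_all add: Ot_def)
  have eq': "P.W ^ 2 * u * v = P'.W ^ 2 * u' * v'"
    using eq by (simp add: P.T1_param_eq P'.T1_param_eq)
  then have "P.W ^ 2 ^ 2 = P'.W ^ 2 ^ 2"
    using P.W2uv_pow_N[OF v_t(1)] P'.W2uv_pow_N[OF v_t(2)] by simp
  then have W_eq: "P.W = P'.W"
    by (simp only: power_two_power_eq_iff_CHAR_2[OF assms(1)])
  have "(P.W * u) ^ 2 ^ (L + 2) = (P'.W * u') ^ 2 ^ (L + 2)"
    using P.W2uv_pow_t(2)[OF v_t(1)] P'.W2uv_pow_t(2)[OF v_t(2)] eq'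
    by (simp add: r_eq k_eq power_add mult.commute)
  then have "u = u'"
    using W_eq P.W_nonzero by (simp only: power_two_power_eq_iff_CHAR_2[OF assms(1)]) simp
  with eq' W_eq P.W_nonzero P.u_nonzero show ?thesis
    by auto
qed

lemma inj_on_T1_param:
  assumes "CHAR('a::field) = 2"
  shows "inj_on (\<lambda>(u, v). T1_param u v) ((Os m - {1}) \<times> (Ot m :: 'a set))"
  using T1_param_inject[OF assms] by (auto intro!: inj_onI)

lemma CHAR_eq_2_if_card_eq_q_pow_4:
  assumes "card (UNIV :: 'a::{field,finite} set) = q ^ 4"
  shows "CHAR('a) = 2"
proof -
  have "card (UNIV :: 'a set) = 2 ^ (m * 4)"
    using assms by (simp add: qq_def power_mult)
  then show ?thesis
    by (rule CHAR_eq_2_if_card_eq_power_2) (use three_le_m in linarith)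
qed

lemma card_T1_ge:
  assumes "card (UNIV :: 'a::{field,finite} set) = q ^ 4"
  shows "q ^ 2 + 1 \<le> card (T1 m :: 'a set)"
proof -
  have char: "CHAR('a) = 2"
    using assms by (rule CHAR_eq_2_if_card_eq_q_pow_4)
  have card_Os: "s \<le> card (Os m :: 'a set)" and card_Ot: "t \<le> card (Ot m :: 'a set)"
    using s_dvd_q4_minus_1 t_dvd_q4_minus_1 s_pos t_pos assms
    by (simp_all add: Os_def Ot_def card_roots_of_unity_ge)
  have "card (Os m - {1} :: 'a set) = card (Os m :: 'a set) - 1"
    by (simp add: Os_def card_Diff_singleton)
  moreover have "Ot m \<inter> (\<lambda>(u, v). T1_param u v) ` ((Os m - {1}) \<times> Ot m) = ({} :: 'a set)"
    using T1_param_notin_Ot[OF char] by auto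
  ultimately have "card (T1 m :: 'a set)
      = card (Ot m :: 'a set) + (card (Os m :: 'a set) - 1) * card (Ot m :: 'a set)"
    unfolding T1_eq_image
    by (simp add: card_Un_disjoint card_image inj_on_T1_param[OF char] card_cartesian_product)
  also have "\<dots> = card (Os m :: 'a set) * card (Ot m :: 'a set)"
    using card_Os s_pos by (cases "card (Os m :: 'a set)") simp_all
  finally have "s * t \<le> card (T1 m :: 'a set)"
    using mult_le_mono[OF card_Os card_Ot] by simp
  then show ?thesis
    by (simp add: s_mult_t)
qed

lemma card_Q1_roots_le: "card {x::'a::field. Q1 m x = 0} \<le> q ^ 2 + 1"
proof -
  define P :: "'a poly" where
    "P = monom 1 (q ^ 2 + 1) + (1 + pcompose (Q1_tail r k L) (monom 1 t))"
  have "poly P x = Q1 m x" for x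
    by (simp add: P_def Q1_eq_tail poly_pcompose poly_monom add.assoc)
  moreover have "degree (pcompose (Q1_tail r k L) (monom (1::'a) t)) < q ^ 2 + 1"
  proof -
    have "degree (Q1_tail (2 * k) k L :: 'a poly) < 2 * k * k - 2 * k + 1"
      by (rule degree_Q1_tail_less[OF two_le_k]) (simp add: k_eq)
    then have "degree (Q1_tail r k L :: 'a poly) < s"
      by (simp add: r_eq ss_def q_eq)
    then have "degree (Q1_tail r k L :: 'a poly) * t < s * t"
      using t_pos by simp
    then show ?thesis
      by (simp add: degree_pcompose degree_monom_eq s_mult_t)
  qed
  then have "degree (1 + pcompose (Q1_tail r k L) (monom (1::'a) t)) < q ^ 2 + 1"
    by (intro degree_add_less) simp_all
  then have "degree P = q ^ 2 + 1"
    unfolding P_def by (simp add: degree_add_eq_left degree_monom_eq)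
  then have "P \<noteq> 0"
    by auto
  ultimately show ?thesis
    using card_poly_roots_bound[of P] \<open>degree P = q ^ 2 + 1\<close> by simp
qed

end

theorem theorem4p6:
  fixes m :: nat
  assumes "odd m" and "m \<ge> 3"
    and "card (UNIV :: 'a set) = qq m ^ 4"
  shows "{x :: 'a::{field,finite}. Q1 m x = 0} = T1 m"
proof -
  interpret suzuki_parameters m
    using assms(1,2) by unfold_locales
  have "CHAR('a) = 2"
    using assms(3) by (rule CHAR_eq_2_if_card_eq_q_pow_4)
  then have "T1 m \<subseteq> {x :: 'a. Q1 m x = 0}"
    by (rule T1_subset_Q1_roots)
  moreover have "card {x :: 'a. Q1 m x = 0} \<le> card (T1 m :: 'a set)"
    using card_Q1_roots_le card_T1_ge[OF assms(3)] by (rule le_trans)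
  ultimately show ?thesis
    by (intro card_seteq[symmetric]) simp_all
qed

end
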